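(* Let $n\ge2$ and let $a_2,\dots,a_n$ be distinct real numbers with each $a_i<0$ or $a_i>1$; let $F(a)=(a-1)\prod_{i=2}^n(a-a_i)$ and $0<a<1$. Put $\epsilon_i=+1$ if $a_i<0$ and $\epsilon_i=-1$ if $a_i>1$, and let $c>0$, $\xi_i>0$ ($i=2,\dots,n$). Consider the superintegrable system of the construction below with $$x(a)=\frac{c}{\sqrt{1-a}}-\sum_{i=2}^n\frac{\epsilon_i(-\epsilon_ia_i)^{3/2}\xi_i}{\sqrt{\epsilon_i(a-a_i)}}.$$ Under $u=\sqrt{a/(1-a)}\in(0,\infty)$ its metric becomes $$g=(1+u^2)\,\frac{\mu^2(u)\,du^2+dy^2}{u^2},\qquad \mu(u)=c+\sum_{i=2}^n\frac{\xi_i}{(1+\rho_iu^2)^{3/2}},\qquad \rho_i=1-\frac1{a_i}\in(0,1)\cup(1,\infty),$$ with $u\in(0,\infty)$, $y\in\mathbb{R}$, and this metric together with the integrals $S_1,S_2$ is globally defined on $M\cong\mathbb{H}^2$.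
   Context: Construction: with roots $a_1=1,a_2,\dots,a_n$ of $F=\sum_kA_ka^k$, on $(a,y)\in(0,1)\times\mathbb{R}$ put $H=\Pi^2+aP_y^2$, $\Pi=\frac a{\dot x}P_a$ (geodesic Hamiltonian of $g=\dot x^2a^{-2}da^2+a^{-1}dy^2$), $\Delta_i=\epsilon_i(a-a_i)$ ($\epsilon_1=-1$), and write $x=\sum_i\xi'_i\Delta_i^{-1/2}$ (here $\xi'_1=c$, $\xi'_i=-\epsilon_i(-\epsilon_ia_i)^{3/2}\xi_i$). Then $G=\sum_{k=0}^nA_{n-k}H^{n-k}P_y^{2k}$, $Q_1=\sum_{k=1}^n\tilde b_kH^{n-k}\Pi P_y^{2k-1}$, $Q_2=\sum_{k=1}^n\tilde c_kH^{n-k}P_y^{2k}$, $S_1=Q_1+yG$, $S_2=Q_2+yQ_1+\frac{y^2}2G$, where $\tilde b_k=(-1)^k\sum_i\frac{\xi'_i}{\sqrt{\Delta_i}}\sigma^i_{k-1}$, $\tilde c_k=\frac{(-1)^{k+1}}2\big(\sum_i\frac{\xi_i'^2}{\Delta_i}\sigma^i_{k-1}+\sum_{i\ne j}\frac{\xi'_i\xi'_j}{\sqrt{\Delta_i\Delta_j}}(\sigma^{ij}_{k-1}+a\sigma^{ij}_{k-2})\big)$; $\sigma^i_m$ defined by $\prod_{l\ne i}(a-a_l)=\sum_{m=0}^{n-1}(-1)^m\sigma^i_ma^{n-1-m}$, $\sigma^i_{-1}=\sigma^i_n=0$, and $\sigma^{ij}_m$ by $\prod_{l\ne i,j}(a-a_l)=\sum_{m=0}^{n-2}(-1)^m\sigma^{ij}_ma^{n-2-m}$,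 $\sigma^{ij}_{-2}=\sigma^{ij}_{-1}=\sigma^{ij}_{n-1}=\sigma^{ij}_n=0$. "Globally defined on $M\cong\mathbb{H}^2$" means: $g$ is a smooth Riemannian metric on the whole domain $M=\{(u,y):u>0\}$, there is a smooth diffeomorphism $t=t(u)$ of $(0,\infty)$ onto $(0,\infty)$ with $g=\Phi\,(dt^2+dy^2)/t^2$ for a smooth positive function $\Phi$ (so $(M,g)$ is conformal to the Poincaré half-plane), and $S_1,S_2$ are smooth functions on $T^*M$. *)

theory Defs
  imports "HOL-Analysis.Analysis" "HOL-Computational_Algebra.Polynomial"
begin

fun C_on :: "nat \<Rightarrow> ('a::euclidean_space) set \<Rightarrow> ('a \<Rightarrow> real) \<Rightarrow> bool" where
  "C_on 0 S f = continuous_on S f"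
| "C_on (Suc k) S f =
     ((\<forall>x\<in>S. f differentiable (at x)) \<and>
      (\<forall>b\<in>Basis. C_on k S (\<lambda>x. frechet_derivative f (at x) b)))"

definition smooth_on :: "('a::euclidean_space) set \<Rightarrow> ('a \<Rightarrow> real) \<Rightarrow> bool" where
  "smooth_on S f \<longleftrightarrow> (\<forall>k. C_on k S f)"

definition diffeo_pos :: "(real \<Rightarrow> real) \<Rightarrow> bool" where
  "diffeo_pos t \<longleftrightarrow> bij_betw t {0<..} {0<..} \<and> smooth_on {0<..} t
      \<and> smooth_on {0<..} (inv_into {0<..} t)"

section \<open>The construction (roots r 1 .. r n, signs e i, constants xp i = xi'_i)\<close>

definition Delta :: "(nat \<Rightarrow> real) \<Rightarrow> (nat \<Rightarrow> real) \<Rightarrow> nat \<Rightarrow> real \<Rightarrow> real" where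
  "Delta e r i a = e i * (a - r i)"

definition xcon :: "nat \<Rightarrow> (nat \<Rightarrow> real) \<Rightarrow> (nat \<Rightarrow> real) \<Rightarrow> (nat \<Rightarrow> real) \<Rightarrow> real \<Rightarrow> real" where
  "xcon n e r xp a = (\<Sum>i=1..n. xp i / sqrt (Delta e r i a))"

definition Acoef :: "nat \<Rightarrow> (nat \<Rightarrow> real) \<Rightarrow> nat \<Rightarrow> real" where
  "Acoef n r k = coeff (\<Prod>i=1..n. [:- r i, 1:]) k"

definition sig1 :: "nat \<Rightarrow> (nat \<Rightarrow> real) \<Rightarrow> nat \<Rightarrow> int \<Rightarrow> real" where
  "sig1 n r i m = (if 0 \<le> m \<and> m \<le> int n - 1
      then (-1) ^ nat m * coeff (\<Prod>l\<in>{1..n} - {i}. [:- r l, 1:]) (n - 1 - nat m) else 0)"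

definition sig2 :: "nat \<Rightarrow> (nat \<Rightarrow> real) \<Rightarrow> nat \<Rightarrow> nat \<Rightarrow> int \<Rightarrow> real" where
  "sig2 n r i j m = (if 0 \<le> m \<and> m \<le> int n - 2
      then (-1) ^ nat m * coeff (\<Prod>l\<in>{1..n} - {i, j}. [:- r l, 1:]) (n - 2 - nat m) else 0)"

definition btil :: "nat \<Rightarrow> (nat \<Rightarrow> real) \<Rightarrow> (nat \<Rightarrow> real) \<Rightarrow> (nat \<Rightarrow> real) \<Rightarrow> nat \<Rightarrow> real \<Rightarrow> real" where
  "btil n e r xp k a = (-1) ^ k *
     (\<Sum>i=1..n. xp i / sqrt (Delta e r i a) * sig1 n r i (int k - 1))"

definition ctil :: "nat \<Rightarrow> (nat \<Rightarrow> real) \<Rightarrow> (nat \<Rightarrow> real) \<Rightarrow> (nat \<Rightarrow> real) \<Rightarrow> nat \<Rightarrow> real \<Rightarrow> real" where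
  "ctil n e r xp k a = (-1) ^ (k + 1) / 2 *
     ((\<Sum>i=1..n. (xp i)\<^sup>2 / Delta e r i a * sig1 n r i (int k - 1))
      + (\<Sum>i\<in>{1..n}. \<Sum>j\<in>{1..n} - {i}.
           xp i * xp j / sqrt (Delta e r i a * Delta e r j a)
           * (sig2 n r i j (int k - 1) + a * sig2 n r i j (int k - 2))))"

definition Picon :: "nat \<Rightarrow> (nat \<Rightarrow> real) \<Rightarrow> (nat \<Rightarrow> real) \<Rightarrow> (nat \<Rightarrow> real) \<Rightarrow> real \<Rightarrow> real \<Rightarrow> real" where
  "Picon n e r xp a Pa = a / deriv (xcon n e r xp) a * Pa"

definition Hcon :: "nat \<Rightarrow> (nat \<Rightarrow> real) \<Rightarrow> (nat \<Rightarrow> real) \<Rightarrow> (nat \<Rightarrow> real) \<Rightarrow> real \<Rightarrow> real \<Rightarrow> real \<Rightarrow> real" where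
  "Hcon n e r xp a Pa Py = (Picon n e r xp a Pa)\<^sup>2 + a * Py\<^sup>2"

definition Gcon :: "nat \<Rightarrow> (nat \<Rightarrow> real) \<Rightarrow> (nat \<Rightarrow> real) \<Rightarrow> (nat \<Rightarrow> real) \<Rightarrow> real \<Rightarrow> real \<Rightarrow> real \<Rightarrow> real" where
  "Gcon n e r xp a Pa Py =
     (\<Sum>k=0..n. Acoef n r (n - k) * (Hcon n e r xp a Pa Py) ^ (n - k) * Py ^ (2 * k))"

definition Q1con :: "nat \<Rightarrow> (nat \<Rightarrow> real) \<Rightarrow> (nat \<Rightarrow> real) \<Rightarrow> (nat \<Rightarrow> real) \<Rightarrow> real \<Rightarrow> real \<Rightarrow> real \<Rightarrow> real" where
  "Q1con n e r xp a Pa Py =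
     (\<Sum>k=1..n. btil n e r xp k a * (Hcon n e r xp a Pa Py) ^ (n - k)
                 * Picon n e r xp a Pa * Py ^ (2 * k - 1))"

definition Q2con :: "nat \<Rightarrow> (nat \<Rightarrow> real) \<Rightarrow> (nat \<Rightarrow> real) \<Rightarrow> (nat \<Rightarrow> real) \<Rightarrow> real \<Rightarrow> real \<Rightarrow> real \<Rightarrow> real" where
  "Q2con n e r xp a Pa Py =
     (\<Sum>k=1..n. ctil n e r xp k a * (Hcon n e r xp a Pa Py) ^ (n - k) * Py ^ (2 * k))"

definition S1con :: "nat \<Rightarrow> (nat \<Rightarrow> real) \<Rightarrow> (nat \<Rightarrow> real) \<Rightarrow> (nat \<Rightarrow> real) \<Rightarrow> real \<Rightarrow> real \<Rightarrow> real \<Rightarrow> real \<Rightarrow> real" where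
  "S1con n e r xp a y Pa Py = Q1con n e r xp a Pa Py + y * Gcon n e r xp a Pa Py"

definition S2con :: "nat \<Rightarrow> (nat \<Rightarrow> real) \<Rightarrow> (nat \<Rightarrow> real) \<Rightarrow> (nat \<Rightarrow> real) \<Rightarrow> real \<Rightarrow> real \<Rightarrow> real \<Rightarrow> real \<Rightarrow> real" where
  "S2con n e r xp a y Pa Py = Q2con n e r xp a Pa Py + y * Q1con n e r xp a Pa Py
      + y\<^sup>2 / 2 * Gcon n e r xp a Pa Py"

definition g_aa :: "nat \<Rightarrow> (nat \<Rightarrow> real) \<Rightarrow> (nat \<Rightarrow> real) \<Rightarrow> (nat \<Rightarrow> real) \<Rightarrow> real \<Rightarrow> real" where
  "g_aa n e r xp a = (deriv (xcon n e r xp) a)\<^sup>2 / a\<^sup>2"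

definition g_yy :: "real \<Rightarrow> real" where
  "g_yy a = 1 / a"

section \<open>The change of variables u = sqrt(a/(1-a)), i.e. a = u^2/(1+u^2)\<close>

definition acoord :: "real \<Rightarrow> real" where
  "acoord u = u\<^sup>2 / (1 + u\<^sup>2)"


end

theory Submission
  imports Defs
begin

(* Under a = u^2/(1 + u^2) one has Delta_1 = 1/(1 + u^2), and for i >= 2 each Delta_i factors
   as (-e_i a_i)(1 + rho_i u^2)/(1 + u^2) with positive factors, so the factor (-e_i a_i)^(3/2)
   in xi'_i cancels and x'(a) = (1 + u^2)^(3/2) mu(u)/2; this gives the stated form of g.  The
   function t(u) = u S(u), S(u) = c + sum_i xi_i/sqrt(1 + rho_i u^2), satisfies t' = mu > 0 and
   t(u) >= c u, so it is a diffeomorphism of (0,oo), and g = (1 + u^2) S^2 (dt^2 + dy^2)/t^2.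
   Smoothness of g, S_1 and S_2 holds because for 0 < a < 1 all Delta_i and x'(a) are positive,
   so every square root and quotient in their definitions is taken away from zero. *)

section \<open>Smooth functions\<close>

declare C_on.simps(2)[simp del]

lemma C_on_Suc_iff:
  "C_on (Suc k) S f \<longleftrightarrow> (\<forall>x\<in>S. f differentiable (at x)) \<and>
      (\<forall>b\<in>Basis. C_on k S (\<lambda>x. frechet_derivative f (at x) b))"
  by (rule C_on.simps(2))

lemma C_on_cong:
  assumes "open S" "\<And>x. x \<in> S \<Longrightarrow> f x = g x" "C_on k S f"
  shows "C_on k S g"
  using assms(2,3)
proof (induction k arbitrary: f g)
  case 0
  then show ?case using continuous_on_cong by (metis C_on.simps(1))
next
  case (Suc k)
  have f_diff: "\<forall>x\<in>S. f differentiable (at x)"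
    and f_partial: "\<forall>b\<in>Basis. C_on k S (\<lambda>x. frechet_derivative f (at x) b)"
    using Suc.prems(2) unfolding C_on_Suc_iff by blast+
  have "\<forall>x\<in>S. g differentiable (at x)"
    using f_diff Suc.prems(1) assms(1) by (metis differentiable_def has_derivative_transform_within_open)
  moreover have "x \<in> S \<Longrightarrow> frechet_derivative f (at x) = frechet_derivative g (at x)" for x
    using f_diff Suc.prems(1) assms(1) by (metis frechet_derivative_transform_within_open)
  then have "C_on k S (\<lambda>x. frechet_derivative g (at x) b)" if "b \<in> Basis" for b
    by (intro Suc.IH[OF _ f_partial[rule_format, OF that]]) simp
  ultimately show ?case unfolding C_on_Suc_iff by blast
qed

lemma C_on_SucI:
  assumes "open S" "\<And>x. x \<in> S \<Longrightarrow> (f has_derivative f' x) (at x)"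
    "\<And>b. b \<in> Basis \<Longrightarrow> C_on k S (\<lambda>x. f' x b)"
  shows "C_on (Suc k) S f"
proof -
  have "C_on k S (\<lambda>x. frechet_derivative f (at x) b)" if "b \<in> Basis" for b
    by (rule C_on_cong[OF assms(1) _ assms(3)[OF that]]) (metis assms(2) frechet_derivative_at)
  moreover have "\<forall>x\<in>S. f differentiable (at x)"
    using assms(2) by (auto simp: differentiable_def)
  ultimately show ?thesis unfolding C_on_Suc_iff by blast
qed

lemma C_on_Suc_has_derivative:
  "C_on (Suc k) S f \<Longrightarrow> x \<in> S \<Longrightarrow> (f has_derivative frechet_derivative f (at x)) (at x)"
  using frechet_derivative_works unfolding C_on_Suc_iff by blast

lemma C_on_Suc_partial:
  "C_on (Suc k) S f \<Longrightarrow> b \<in> Basis \<Longrightarrow> C_on k S (\<lambda>x. frechet_derivative f (at x) b)"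
  unfolding C_on_Suc_iff by blast

lemma C_on_Suc_imp: "C_on (Suc k) S f \<Longrightarrow> C_on k S f"
proof (induction k arbitrary: f)
  case 0
  then have "\<forall>x\<in>S. f differentiable (at x)" unfolding C_on_Suc_iff by blast
  then show ?case
    by (auto intro!: continuous_at_imp_continuous_on differentiable_imp_continuous_within)
next
  case (Suc k)
  then show ?case unfolding C_on_Suc_iff[of k] C_on_Suc_iff[of "Suc k"] by blast
qed

lemma C_on_const: "open S \<Longrightarrow> C_on k S (\<lambda>x. c)"
proof (induction k arbitrary: c)
  case (Suc k)
  show ?case by (rule C_on_SucI[where f'="\<lambda>x h. 0"]) (use Suc in auto)
qed simp

lemma C_on_linear: "open S \<Longrightarrow> bounded_linear l \<Longrightarrow> C_on k S l"
proof (cases k)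
  case (Suc m)
  assume "open S" "bounded_linear l"
  then show ?thesis unfolding Suc
    by (intro C_on_SucI[where f'="\<lambda>x. l"]) (auto intro: C_on_const bounded_linear_imp_has_derivative)
qed (simp add: linear_continuous_on)

lemma C_on_add: "open S \<Longrightarrow> C_on k S f \<Longrightarrow> C_on k S g \<Longrightarrow> C_on k S (\<lambda>x. f x + g x)"
proof (induction k arbitrary: f g)
  case (Suc k)
  show ?case
  proof (rule C_on_SucI[where f'="\<lambda>x h. frechet_derivative f (at x) h + frechet_derivative g (at x) h"])
    show "((\<lambda>x. f x + g x) has_derivative
            (\<lambda>h. frechet_derivative f (at x) h + frechet_derivative g (at x) h)) (at x)"
      if "x \<in> S" for x
      using Suc.prems that by (intro has_derivative_add C_on_Suc_has_derivative)
    show "C_on k S (\<lambda>x. frechet_derivative f (at x) b + frechet_derivative g (at x) b)"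
      if "b \<in> Basis" for b
      using Suc.prems that by (intro Suc.IH C_on_Suc_partial)
  qed (fact Suc.prems)
qed (auto intro: continuous_on_add)

lemma C_on_mult: "open S \<Longrightarrow> C_on k S f \<Longrightarrow> C_on k S g \<Longrightarrow> C_on k S (\<lambda>x. f x * g x)"
proof (induction k arbitrary: f g)
  case (Suc k)
  have f: "C_on k S f" and g: "C_on k S g"
    using Suc.prems C_on_Suc_imp by blast+
  show ?case
  proof (rule C_on_SucI[where
        f'="\<lambda>x h. f x * frechet_derivative g (at x) h + frechet_derivative f (at x) h * g x"])
    show "((\<lambda>x. f x * g x) has_derivative
            (\<lambda>h. f x * frechet_derivative g (at x) h + frechet_derivative f (at x) h * g x)) (at x)"
      if "x \<in> S" for x
      using Suc.prems that by (intro has_derivative_mult C_on_Suc_has_derivative)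
    show "C_on k S (\<lambda>x. f x * frechet_derivative g (at x) b + frechet_derivative f (at x) b * g x)"
      if "b \<in> Basis" for b
      using Suc.prems f g that by (intro C_on_add Suc.IH C_on_Suc_partial)
  qed (fact Suc.prems)
qed (auto intro: continuous_on_mult)

lemma C_on_compose:
  fixes g :: "real \<Rightarrow> real" and f :: "'a::euclidean_space \<Rightarrow> real"
  assumes "open S" "open U"
  shows "\<forall>m. C_on m U g \<Longrightarrow> \<forall>x\<in>S. f x \<in> U \<Longrightarrow> C_on k S f \<Longrightarrow> C_on k S (\<lambda>x. g (f x))"
proof (induction k arbitrary: g f)
  case 0
  have "continuous_on U g" "continuous_on S f"
    using spec[OF 0(1), of 0] 0(3) by simp_all
  then show ?case
    unfolding C_on.simps(1) by (rule continuous_on_compose2) (use 0(2) in auto)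
next
  case (Suc k)
  define G where "G y = frechet_derivative g (at y)" for y
  define F where "F x = frechet_derivative f (at x)" for x
  have g_deriv: "(g has_derivative G y) (at y)" if "y \<in> U" for y
    unfolding G_def using C_on_Suc_has_derivative[of 0 U g] Suc.prems(1) that by blast
  have f_deriv: "(f has_derivative F x) (at x)" if "x \<in> S" for x
    unfolding F_def using C_on_Suc_has_derivative Suc.prems(3) that by blast
  have G_scale: "G y h = h * G y 1" if "y \<in> U" for y h
    using linear_scale[OF has_derivative_linear[OF g_deriv[OF that]], of h 1] by simp
  have "\<forall>m. C_on m U (\<lambda>y. G y 1)"
  proof
    fix m
    have "C_on (Suc m) U g" using Suc.prems(1) by blast
    from C_on_Suc_partial[OF this, of 1] show "C_on m U (\<lambda>y. G y 1)"
      unfolding G_def by (simp add: Basis_real_def)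
  qed
  from Suc.IH[OF this Suc.prems(2) C_on_Suc_imp[OF Suc.prems(3)]]
  have G1f: "C_on k S (\<lambda>x. G (f x) 1)" .
  show ?case
  proof (rule C_on_SucI[where f'="\<lambda>x h. G (f x) (F x h)"])
    show "((\<lambda>x. g (f x)) has_derivative (\<lambda>h. G (f x) (F x h))) (at x)" if "x \<in> S" for x
      using has_derivative_compose[OF f_deriv[OF that] g_deriv] Suc.prems(2) that by blast
    fix b :: 'a assume b: "b \<in> Basis"
    have "C_on k S (\<lambda>x. F x b * G (f x) 1)"
      using C_on_mult[OF assms(1) C_on_Suc_partial[OF Suc.prems(3) b] G1f] unfolding F_def .
    then show "C_on k S (\<lambda>x. G (f x) (F x b))"
    proof (rule C_on_cong[OF assms(1), rotated])
      show "F x b * G (f x) 1 = G (f x) (F x b)" if "x \<in> S" for x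
        using G_scale[of "f x" "F x b"] Suc.prems(2) that by simp
    qed

  qed (fact assms(1))
qed

lemma C_on_Suc_real:
  fixes g :: "real \<Rightarrow> real"
  assumes "open U" "\<And>y. y \<in> U \<Longrightarrow> (g has_real_derivative g' y) (at y)" "C_on k U g'"
  shows "C_on (Suc k) U g"
proof (rule C_on_SucI[where f'="\<lambda>y. (*) (g' y)"])
  show "(g has_derivative (*) (g' x)) (at x)" if "x \<in> U" for x
    using assms(2)[OF that] by (simp add: has_field_derivative_def)
  show "C_on k U (\<lambda>x. g' x * b)" if "b \<in> Basis" for b
    using that assms(3) by (simp add: Basis_real_def)
qed (fact assms(1))

lemma smooth_on_cong:
  "open S \<Longrightarrow> (\<And>x. x \<in> S \<Longrightarrow> f x = g x) \<Longrightarrow> smooth_on S f \<Longrightarrow> smooth_on S g"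
  using C_on_cong unfolding smooth_on_def by metis

lemma smooth_on_const: "open S \<Longrightarrow> smooth_on S (\<lambda>x. c)"
  by (simp add: smooth_on_def C_on_const)

lemma smooth_on_linear: "open S \<Longrightarrow> bounded_linear l \<Longrightarrow> smooth_on S l"
  by (simp add: smooth_on_def C_on_linear)

lemma smooth_on_id: "open (S::real set) \<Longrightarrow> smooth_on S (\<lambda>x. x)"
  using smooth_on_linear[OF _ bounded_linear_ident] by simp

lemma smooth_on_add:
  "open S \<Longrightarrow> smooth_on S f \<Longrightarrow> smooth_on S g \<Longrightarrow> smooth_on S (\<lambda>x. f x + g x)"
  by (simp add: smooth_on_def C_on_add)

lemma smooth_on_mult:
  "open S \<Longrightarrow> smooth_on S f \<Longrightarrow> smooth_on S g \<Longrightarrow> smooth_on S (\<lambda>x. f x * g x)"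
  by (simp add: smooth_on_def C_on_mult)

lemma smooth_on_minus:
  assumes "open S" "smooth_on S f" shows "smooth_on S (\<lambda>x. - f x)"
  using smooth_on_mult[OF assms(1) smooth_on_const[OF assms(1), of "-1"] assms(2)] by simp

lemma smooth_on_diff:
  assumes "open S" "smooth_on S f" "smooth_on S g" shows "smooth_on S (\<lambda>x. f x - g x)"
  using smooth_on_add[OF assms(1,2) smooth_on_minus[OF assms(1,3)]] by simp

lemma smooth_on_power: "open S \<Longrightarrow> smooth_on S f \<Longrightarrow> smooth_on S (\<lambda>x. f x ^ m)"
  by (induction m) (auto intro: smooth_on_const smooth_on_mult)

lemma smooth_on_sum:
  assumes "open S" "\<And>i. i \<in> A \<Longrightarrow> smooth_on S (f i)"
  shows "smooth_on S (\<lambda>x. \<Sum>i\<in>A. f i x)"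
proof (cases "finite A")
  case True
  then show ?thesis using assms(2)
    by (induction A rule: finite_induct) (auto intro: smooth_on_const smooth_on_add assms(1))
qed (simp add: smooth_on_const assms(1))

lemma smooth_on_compose:
  fixes g :: "real \<Rightarrow> real" and f :: "'a::euclidean_space \<Rightarrow> real"
  assumes "open S" "open U" "smooth_on U g" "\<And>x. x \<in> S \<Longrightarrow> f x \<in> U" "smooth_on S f"
  shows "smooth_on S (\<lambda>x. g (f x))"
  using assms C_on_compose[OF assms(1,2)] unfolding smooth_on_def by blast

lemma smooth_on_inverse_real: "smooth_on (-{0}) (inverse :: real \<Rightarrow> real)"
  unfolding smooth_on_def
proof
  have o: "open (-{0::real})" by (simp add: open_Compl)
  fix k show "C_on k (-{0}) (inverse :: real \<Rightarrow> real)"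
  proof (induction k)
    case (Suc k)
    have "C_on k (-{0}) (\<lambda>y::real. - 1 * (inverse y * inverse y))"
      using C_on_mult[OF o C_on_const[OF o] C_on_mult[OF o Suc Suc]] .
    moreover have "(inverse has_real_derivative - 1 * (inverse y * inverse y)) (at y)"
      if "y \<in> -{0}" for y :: real
      using DERIV_inverse[of y] that by (simp add: power2_eq_square)
    ultimately show ?case by (intro C_on_Suc_real[OF o])
  qed (simp add: continuous_on_inverse continuous_on_id)
qed

lemma smooth_on_inverse:
  fixes f :: "'a::euclidean_space \<Rightarrow> real"
  assumes "open S" "smooth_on S f" "\<And>x. x \<in> S \<Longrightarrow> f x \<noteq> 0"
  shows "smooth_on S (\<lambda>x. inverse (f x))"
  by (rule smooth_on_compose[OF assms(1) _ smooth_on_inverse_real])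
    (use assms in \<open>auto simp: open_Compl\<close>)

lemma smooth_on_divide:
  fixes f :: "'a::euclidean_space \<Rightarrow> real"
  assumes "open S" "smooth_on S f" "smooth_on S g" "\<And>x. x \<in> S \<Longrightarrow> g x \<noteq> 0"
  shows "smooth_on S (\<lambda>x. f x / g x)"
  using smooth_on_mult[OF assms(1,2) smooth_on_inverse[OF assms(1,3,4)]]
  by (simp add: divide_inverse)

lemma smooth_on_sqrt_real: "smooth_on {0<..} (sqrt :: real \<Rightarrow> real)"
  unfolding smooth_on_def
proof
  have o: "open ({0<..} :: real set)" by simp
  fix k show "C_on k {0<..} (sqrt :: real \<Rightarrow> real)"
  proof (induction k)
    case (Suc k)
    have "C_on k {0<..} (\<lambda>y::real. inverse (sqrt y))"
      using C_on_compose[OF o _ _ _ Suc, of "-{0}" inverse] smooth_on_inverse_real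
      by (auto simp: smooth_on_def open_Compl)
    then have "C_on k {0<..} (\<lambda>y::real. inverse (sqrt y) * (1/2))"
      using C_on_mult[OF o _ C_on_const[OF o]] by blast
    moreover have "(sqrt has_real_derivative inverse (sqrt y) * (1/2)) (at y)"
      if "y \<in> {0<..}" for y :: real
      using DERIV_real_sqrt[of y] that by simp
    ultimately show ?case by (intro C_on_Suc_real[OF o])
  qed (simp add: continuous_on_real_sqrt continuous_on_id)
qed

lemma smooth_on_sqrt:
  fixes f :: "'a::euclidean_space \<Rightarrow> real"
  assumes "open S" "smooth_on S f" "\<And>x. x \<in> S \<Longrightarrow> f x > 0"
  shows "smooth_on S (\<lambda>x. sqrt (f x))"
  by (rule smooth_on_compose[OF assms(1) _ smooth_on_sqrt_real]) (use assms in auto)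

lemmas smooth_on_arith_intros = smooth_on_const smooth_on_add smooth_on_diff smooth_on_minus
  smooth_on_mult smooth_on_divide smooth_on_power smooth_on_sum smooth_on_sqrt

lemma smooth_on_deriv:
  fixes g :: "real \<Rightarrow> real"
  assumes "open U" "smooth_on U g"
  shows "smooth_on U (deriv g)"
  unfolding smooth_on_def
proof
  fix m
  have "C_on (Suc m) U g" using assms(2) smooth_on_def by blast
  then have partial: "C_on m U (\<lambda>y. frechet_derivative g (at y) 1)"
    and diff: "\<forall>y\<in>U. g differentiable (at y)"
    unfolding C_on_Suc_iff by (auto simp: Basis_real_def)
  have "frechet_derivative g (at y) 1 = deriv g y" if "y \<in> U" for y
    using diff that by (metis DERIV_deriv_iff_real_differentiable frechet_derivative_at
        has_field_derivative_def mult_1_right)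
  then show "C_on m U (deriv g)"
    by (rule C_on_cong[OF assms(1) _ partial])
qed

lemma smooth_on_inv_into:
  fixes f :: "real \<Rightarrow> real"
  assumes U: "open U" and V: "open V" and bij: "bij_betw f U V" and f: "smooth_on U f"
    and f'_nz: "\<And>x. x \<in> U \<Longrightarrow> deriv f x \<noteq> 0"
  shows "smooth_on V (inv_into U f)"
proof -
  define g where "g = inv_into U f"
  have f_deriv: "DERIV f x :> deriv f x" if "x \<in> U" for x
  proof -
    have "C_on (Suc 0) U f" using f smooth_on_def by blast
    then have "f differentiable (at x)" using that unfolding C_on_Suc_iff by blast
    then show ?thesis using DERIV_deriv_iff_real_differentiable by blast
  qed
  have gV: "g y \<in> U" and fg: "f (g y) = y" if "y \<in> V" for y
    using that bij unfolding g_def bij_betw_def by (auto intro: inv_into_into f_inv_into_f)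
  have gf: "g (f x) = x" if "x \<in> U" for x
    using that bij unfolding g_def bij_betw_def by (metis inv_into_f_f)
  have g_cont: "isCont g y" if y: "y \<in> V" for y
  proof -
    obtain d where d: "d > 0" "cball (g y) d \<subseteq> U"
      using U gV[OF y] open_contains_cball by blast
    have inU: "z \<in> U" if "\<bar>z - g y\<bar> \<le> d" for z
      using d(2) that by (auto simp: cball_def dist_real_def abs_minus_commute)
    have "isCont g (f (g y))"
      by (rule isCont_inverse_function[OF d(1)]) (use inU gf f_deriv DERIV_isCont in blast)+
    then show ?thesis using fg[OF y] by simp
  qed
  have g_deriv: "DERIV g y :> inverse (deriv f (g y))" if y: "y \<in> V" for y
  proof -
    obtain e where e: "e > 0" "ball y e \<subseteq> V" using V y open_contains_ball by blast
    have fg_near: "f (g z) = z" if "y - e < z" "z < y + e" for z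
      using fg e(2) that by (auto simp: ball_def dist_real_def abs_if subset_iff)
    show ?thesis
      by (rule DERIV_inverse_function[where g=g and x=y and a="y - e" and b="y + e",
            OF f_deriv[OF gV[OF y]] f'_nz[OF gV[OF y]] _ _ _ g_cont[OF y]])
        (use e(1) fg_near in auto)
  qed
  have "\<forall>m. C_on m U (\<lambda>x. inverse (deriv f x))"
    using smooth_on_inverse[OF U smooth_on_deriv[OF U f] f'_nz] smooth_on_def by blast
  then have "C_on k V g" for k
  proof (induction k)
    case (Suc k)
    have "C_on k V (\<lambda>y. inverse (deriv f (g y)))"
      by (rule C_on_compose[OF V U Suc.prems _ Suc.IH[OF Suc.prems]]) (use gV in blast)
    then show ?case using C_on_Suc_real[OF V g_deriv] by blast
  qed (use g_cont in \<open>auto intro: continuous_at_imp_continuous_on\<close>)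
  then show ?thesis unfolding smooth_on_def g_def by blast
qed

lemma open_fst_pos: "open {p :: real \<times> 'b::topological_space. fst p > 0}"
proof -
  have "{p :: real \<times> 'b. fst p > 0} = {0<..} \<times> UNIV" by auto
  then show ?thesis by (simp add: open_Times)
qed

lemma smooth_on_fst_compose:
  assumes "smooth_on {0<..} \<phi>"
  shows "smooth_on {p :: real \<times> 'b::euclidean_space. fst p > 0} (\<lambda>p. \<phi> (fst p))"
  by (rule smooth_on_compose[OF open_fst_pos _ assms])
    (auto intro: smooth_on_linear open_fst_pos bounded_linear_fst)

section \<open>The coordinate \<open>u\<close>\<close>

lemma one_plus_square_pos: "0 < 1 + (u::real)\<^sup>2"
  by (simp add: add_pos_nonneg)

lemma one_plus_square_neq_zero: "1 + (u::real)\<^sup>2 \<noteq> 0"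
  using one_plus_square_pos[of u] by linarith

lemma powr_three_halves: "0 < (x::real) \<Longrightarrow> x powr (3/2) = x * sqrt x"
  using powr_add[of x 1 "1/2"] by (simp add: powr_half_sqrt)

lemma inverse_sqrt_affine_has_real_derivative:
  assumes "0 < e * (a - r)"
  shows "((\<lambda>a. x / sqrt (e * (a - r))) has_real_derivative
           - (x * e) / (2 * (e * (a - r)) powr (3/2))) (at a)"
  using assms by (auto intro!: derivative_eq_intros simp: powr_three_halves field_simps)

lemma linear_over_sqrt_has_real_derivative:
  assumes "0 < 1 + \<rho> * u\<^sup>2"
  shows "((\<lambda>u. u / sqrt (1 + \<rho> * u\<^sup>2)) has_real_derivative
           1 / (1 + \<rho> * u\<^sup>2) powr (3/2)) (at u)"
proof -
  define B where "B = 1 + \<rho> * u\<^sup>2"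
  have "B > 0" "\<rho> * u\<^sup>2 = B - 1" using assms by (auto simp: B_def)
  then have "(sqrt B - u * (inverse (sqrt B) * (u * \<rho>))) / B = 1 / B powr (3/2)"
    by (simp add: powr_three_halves field_simps power2_eq_square)
  then show ?thesis
    using assms by (auto intro!: derivative_eq_intros simp: B_def)
qed

lemma acoord_has_real_derivative: "(acoord has_real_derivative 2 * u / (1 + u\<^sup>2)\<^sup>2) (at u)"
  unfolding acoord_def[abs_def] using one_plus_square_pos[of u]
  by (auto intro!: derivative_eq_intros simp: field_simps power2_eq_square)

lemma deriv_acoord: "deriv acoord u = 2 * u / (1 + u\<^sup>2)\<^sup>2"
  using acoord_has_real_derivative DERIV_imp_deriv by blast

lemma acoord_in_unit_interval: "0 < u \<Longrightarrow> acoord u \<in> {0<..<1}"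
  unfolding acoord_def using one_plus_square_pos[of u] by simp

lemma acoord_sqrt_ratio: "a \<in> {0<..<1} \<Longrightarrow> acoord (sqrt (a / (1 - a))) = a"
  unfolding acoord_def by (simp add: field_simps)

lemma bij_betw_acoord: "bij_betw acoord {0<..} {0<..<1}"
proof (rule bij_betw_imageI)
  show "inj_on acoord {0<..}"
  proof (rule inj_onI)
    fix u v :: real assume "u \<in> {0<..}" "v \<in> {0<..}" "acoord u = acoord v"
    then show "u = v"
      unfolding acoord_def using one_plus_square_pos[of u] one_plus_square_pos[of v]
      by (auto simp: field_simps power2_eq_iff_nonneg)
  qed
  show "acoord ` {0<..} = {0<..<1}"
  proof
    show "{0<..<1} \<subseteq> acoord ` {0<..}"
    proof
      fix a :: real assume a: "a \<in> {0<..<1}"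
      then have "sqrt (a / (1 - a)) \<in> {0<..}" by simp
      with acoord_sqrt_ratio[OF a] show "a \<in> acoord ` {0<..}" by (metis image_eqI)
    qed
  qed (use acoord_in_unit_interval in auto)
qed

lemma smooth_on_acoord: "smooth_on {0<..} acoord"
  unfolding acoord_def[abs_def]
  by (intro smooth_on_arith_intros smooth_on_id) (auto simp: one_plus_square_neq_zero)

lemma g_yy_acoord: "g_yy (acoord u) = (1 + u\<^sup>2) / u\<^sup>2"
  unfolding g_yy_def acoord_def by simp

lemma smooth_on_g_yy_acoord:
  "smooth_on {p :: real \<times> real. fst p > 0} (\<lambda>p. g_yy (acoord (fst p)))"
  unfolding g_yy_acoord
  by (intro smooth_on_fst_compose smooth_on_arith_intros smooth_on_id) auto

section \<open>The metric and the integrals in the coordinate \<open>u\<close>\<close>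

locale superintegrable_data =
  fixes n :: nat and av :: "nat \<Rightarrow> real" and c :: real and xi :: "nat \<Rightarrow> real"
    and r e xp :: "nat \<Rightarrow> real" and mu :: "real \<Rightarrow> real" and rho :: "nat \<Rightarrow> real"
  assumes n2: "n \<ge> 2"
    and outside: "\<forall>i\<in>{2..n}. av i < 0 \<or> av i > 1"
    and cpos: "c > 0"
    and xipos: "\<forall>i\<in>{2..n}. xi i > 0"
    and r_def: "r = (\<lambda>i. if i = 1 then 1 else av i)"
    and e_def: "e = (\<lambda>i. if i = 1 then -1 else if av i < 0 then 1 else -1)"
    and xp_def: "xp = (\<lambda>i. if i = 1 then c
                    else - e i * (- e i * av i) powr (3/2) * xi i)"
    and rho_def: "rho = (\<lambda>i. 1 - 1 / av i)"
    and mu_def: "mu = (\<lambda>u. c + (\<Sum>i=2..n. xi i / (1 + rho i * u\<^sup>2) powr (3/2)))"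
begin

lemma sign_cases: "i \<in> {2..n} \<Longrightarrow> av i < 0 \<and> e i = 1 \<or> av i > 1 \<and> e i = -1"
  using outside unfolding e_def by auto

lemma sign_square: "e i * e i = 1"
  unfolding e_def by auto

lemma minus_sign_mult_root_pos: "i \<in> {2..n} \<Longrightarrow> 0 < - e i * av i"
  using sign_cases by fastforce

lemma rho_range: "\<forall>i\<in>{2..n}. rho i \<in> {0<..<1} \<union> {1<..}"
proof
  fix i assume "i \<in> {2..n}"
  then consider "av i < 0" | "av i > 1" using outside by blast
  then show "rho i \<in> {0<..<1} \<union> {1<..}"
  proof cases
    case 1
    then have "1 / av i < 0" by simp
    then show ?thesis unfolding rho_def by simp
  next
    case 2
    then have "0 < 1 / av i" "1 / av i < 1" by auto
    then show ?thesis unfolding rho_def by simp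
  qed
qed

lemma one_plus_rho_pos: "i \<in> {2..n} \<Longrightarrow> 0 < 1 + rho i * u\<^sup>2"
proof -
  assume "i \<in> {2..n}"
  then have "0 < rho i" using rho_range by auto
  then show ?thesis by (simp add: add_pos_nonneg)
qed

lemma Delta_pos: "a \<in> {0<..<1} \<Longrightarrow> i \<in> {1..n} \<Longrightarrow> 0 < Delta e r i a"
  using sign_cases[of i] unfolding Delta_def r_def e_def by (cases "i = 1") auto

lemma Delta_acoord:
  assumes "i \<in> {2..n}"
  shows "Delta e r i (acoord u) = (- e i * av i) * (1 + rho i * u\<^sup>2) / (1 + u\<^sup>2)"
proof -
  have "av i \<noteq> 0" "i \<noteq> 1" using sign_cases[OF assms] assms by auto
  then have "(- e i * av i) * (1 + rho i * u\<^sup>2) = e i * (u\<^sup>2 - av i * (1 + u\<^sup>2))"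
    unfolding rho_def by (simp add: field_simps)
  moreover have "e i * (u\<^sup>2 / (1 + u\<^sup>2) - av i) = e i * (u\<^sup>2 - av i * (1 + u\<^sup>2)) / (1 + u\<^sup>2)"
    using one_plus_square_neq_zero[of u] by (simp add: field_simps)
  ultimately show ?thesis
    unfolding Delta_def acoord_def using \<open>i \<noteq> 1\<close> by (simp add: r_def)
qed

lemma Delta_one_acoord: "Delta e r 1 (acoord u) = 1 / (1 + u\<^sup>2)"
  unfolding Delta_def r_def e_def acoord_def
  using one_plus_square_neq_zero[of u] by (simp add: field_simps)

lemma xcon_explicit:
  "\<forall>a\<in>{0<..<1::real}. xcon n e r xp a =
     c / sqrt (1 - a)
     - (\<Sum>i=2..n. e i * (- e i * av i) powr (3/2) * xi i / sqrt (e i * (a - av i)))"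
proof
  fix a :: real
  have "xcon n e r xp a = xp 1 / sqrt (Delta e r 1 a) + (\<Sum>i=2..n. xp i / sqrt (Delta e r i a))"
    unfolding xcon_def using n2 by (simp add: sum.atLeast_Suc_atMost numeral_2_eq_2)
  also have "(\<Sum>i=2..n. xp i / sqrt (Delta e r i a))
      = - (\<Sum>i=2..n. e i * (- e i * av i) powr (3/2) * xi i / sqrt (e i * (a - av i)))"
    unfolding sum_negf[symmetric] by (intro sum.cong) (auto simp: xp_def r_def Delta_def)
  finally show "xcon n e r xp a =
     c / sqrt (1 - a) - (\<Sum>i=2..n. e i * (- e i * av i) powr (3/2) * xi i / sqrt (e i * (a - av i)))"
    by (simp add: xp_def e_def r_def Delta_def)
qed

lemma xcon_has_real_derivative:
  "a \<in> {0<..<1} \<Longrightarrow> (xcon n e r xp has_real_derivative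
     (\<Sum>i=1..n. - (xp i * e i) / (2 * Delta e r i a powr (3/2)))) (at a)"
  unfolding xcon_def[abs_def] Delta_def
  by (intro DERIV_sum inverse_sqrt_affine_has_real_derivative Delta_pos[unfolded Delta_def])
    simp_all

lemma deriv_xcon_acoord:
  assumes "0 < u"
  shows "deriv (xcon n e r xp) (acoord u) = (1 + u\<^sup>2) powr (3/2) / 2 * mu u"
proof -
  define A where "A = 1 + u\<^sup>2"
  have A: "0 < A" unfolding A_def by (rule one_plus_square_pos)
  define T where "T i = - (xp i * e i) / (2 * Delta e r i (acoord u) powr (3/2))" for i
  have "deriv (xcon n e r xp) (acoord u) = (\<Sum>i=1..n. T i)"
    unfolding T_def
    using xcon_has_real_derivative acoord_in_unit_interval[OF assms] DERIV_imp_deriv by blast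
  also have "\<dots> = T 1 + (\<Sum>i=2..n. T i)"
    using n2 by (simp add: sum.atLeast_Suc_atMost numeral_2_eq_2)
  also have "T 1 = c * A powr (3/2) / 2"
    unfolding T_def Delta_one_acoord A_def[symmetric]
    using A by (simp add: xp_def e_def powr_divide)
  also have "(\<Sum>i=2..n. T i) = (\<Sum>i=2..n. xi i * A powr (3/2) / (2 * (1 + rho i * u\<^sup>2) powr (3/2)))"
  proof (rule sum.cong[OF refl])
    fix i assume i: "i \<in> {2..n}"
    define K B where "K = - e i * av i" and "B = 1 + rho i * u\<^sup>2"
    have pos: "0 < K powr (3/2)" "0 < B powr (3/2)" "0 < A powr (3/2)"
      using minus_sign_mult_root_pos[OF i] one_plus_rho_pos[OF i, of u] A by (auto simp: K_def B_def)
    have Delta_powr: "Delta e r i (acoord u) powr (3/2) = K powr (3/2) * B powr (3/2) / A powr (3/2)"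
      unfolding Delta_acoord[OF i] A_def K_def B_def by (simp only: powr_divide powr_mult)
    have xp_i: "xp i = - e i * K powr (3/2) * xi i"
      using i by (simp add: xp_def K_def)
    show "T i = xi i * A powr (3/2) / (2 * (1 + rho i * u\<^sup>2) powr (3/2))"
      unfolding T_def Delta_powr xp_i B_def[symmetric] using pos sign_square[of i]
      by (simp add: field_simps)
  qed
  finally show ?thesis
    unfolding mu_def A_def by (simp add: sum_distrib_left sum_divide_distrib algebra_simps)
qed

lemma mu_eq: "mu u = c + (\<Sum>i=2..n. xi i / ((1 + rho i * u\<^sup>2) * sqrt (1 + rho i * u\<^sup>2)))"
  unfolding mu_def by (simp add: powr_three_halves one_plus_rho_pos)

lemma mu_pos: "0 < mu u"
proof -
  have "0 \<le> xi i / (1 + rho i * u\<^sup>2) powr (3/2)" if "i \<in> {2..n}" for i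
    using xipos that by (simp add: less_imp_le)
  then have "0 \<le> (\<Sum>i=2..n. xi i / (1 + rho i * u\<^sup>2) powr (3/2))"
    by (rule sum_nonneg)
  then show ?thesis unfolding mu_def using cpos by linarith
qed

lemma g_aa_acoord:
  assumes "0 < u"
  shows "g_aa n e r xp (acoord u) * (deriv acoord u)\<^sup>2 = (1 + u\<^sup>2) * (mu u)\<^sup>2 / u\<^sup>2"
proof -
  define A where "A = 1 + u\<^sup>2"
  have A: "0 < A" unfolding A_def by (rule one_plus_square_pos)
  have "(A powr (3/2))\<^sup>2 = A ^ 3"
    using A by (simp add: powr_three_halves power2_eq_square power3_eq_cube)
  then show ?thesis
    unfolding g_aa_def deriv_xcon_acoord[OF assms] deriv_acoord
    unfolding acoord_def A_def[symmetric]
    using A assms by (simp add: field_simps power2_eq_square power3_eq_cube)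
qed

lemma smooth_on_g_aa_acoord:
  "smooth_on {p :: real \<times> real. fst p > 0}
     (\<lambda>p. g_aa n e r xp (acoord (fst p)) * (deriv acoord (fst p))\<^sup>2)"
proof (rule smooth_on_fst_compose)
  have "smooth_on {0<..} (\<lambda>u::real. (1 + u\<^sup>2) * (mu u)\<^sup>2 / u\<^sup>2)"
    unfolding mu_eq using one_plus_rho_pos
    by (intro smooth_on_arith_intros smooth_on_id) (auto simp: less_imp_neq[symmetric])
  then show "smooth_on {0<..} (\<lambda>u. g_aa n e r xp (acoord u) * (deriv acoord u)\<^sup>2)"
    by (rule smooth_on_cong[rotated 2]) (auto simp: g_aa_acoord)
qed

lemma g_aa_acoord_pos: "0 < u \<Longrightarrow> 0 < g_aa n e r xp (acoord u) * (deriv acoord u)\<^sup>2"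
  using mu_pos[of u] one_plus_square_pos[of u] by (simp add: g_aa_acoord)

subsection \<open>A conformal coordinate\<close>

definition conformal_scale :: "real \<Rightarrow> real" where
  "conformal_scale u = c + (\<Sum>i=2..n. xi i / sqrt (1 + rho i * u\<^sup>2))"

definition conformal_coord :: "real \<Rightarrow> real" where
  "conformal_coord u = c * u + (\<Sum>i=2..n. xi i * (u / sqrt (1 + rho i * u\<^sup>2)))"

lemma conformal_coord_eq: "conformal_coord u = u * conformal_scale u"
  unfolding conformal_coord_def conformal_scale_def by (simp add: algebra_simps sum_distrib_left)

lemma conformal_scale_ge: "c \<le> conformal_scale u"
proof -
  have "0 \<le> xi i / sqrt (1 + rho i * u\<^sup>2)" if "i \<in> {2..n}" for i
    using xipos one_plus_rho_pos[OF that, of u] that by (simp add: less_imp_le)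
  then have "0 \<le> (\<Sum>i=2..n. xi i / sqrt (1 + rho i * u\<^sup>2))"
    by (rule sum_nonneg)
  then show ?thesis unfolding conformal_scale_def by linarith
qed

lemma conformal_scale_pos: "0 < conformal_scale u"
  using conformal_scale_ge[of u] cpos by linarith

lemma conformal_coord_has_real_derivative: "(conformal_coord has_real_derivative mu u) (at u)"
proof -
  have "((\<lambda>u. xi i * (u / sqrt (1 + rho i * u\<^sup>2))) has_real_derivative
      xi i * (1 / (1 + rho i * u\<^sup>2) powr (3/2))) (at u)" if "i \<in> {2..n}" for i
    by (rule DERIV_cmult[OF linear_over_sqrt_has_real_derivative[OF one_plus_rho_pos[OF that]]])
  then have "((\<lambda>u. \<Sum>i=2..n. xi i * (u / sqrt (1 + rho i * u\<^sup>2))) has_real_derivative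
      (\<Sum>i=2..n. xi i * (1 / (1 + rho i * u\<^sup>2) powr (3/2)))) (at u)"
    by (rule DERIV_sum)
  from DERIV_add[OF DERIV_cmult_Id this]
  show ?thesis unfolding conformal_coord_def[abs_def] mu_def by simp
qed

lemma deriv_conformal_coord: "deriv conformal_coord u = mu u"
  using conformal_coord_has_real_derivative DERIV_imp_deriv by blast

lemma bij_betw_conformal_coord: "bij_betw conformal_coord {0<..} {0<..}"
proof (rule bij_betw_imageI)
  have mono: "u < v \<Longrightarrow> conformal_coord u < conformal_coord v" for u v
    by (rule DERIV_pos_imp_increasing) (use conformal_coord_has_real_derivative mu_pos in blast)+
  show "inj_on conformal_coord {0<..}"
    by (rule inj_onI) (metis linorder_neqE_linordered_idom mono less_irrefl)
  show "conformal_coord ` {0<..} = {0<..}"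
  proof
    show "conformal_coord ` {0<..} \<subseteq> {0<..}"
      using conformal_coord_eq conformal_scale_pos by auto
    show "{0<..} \<subseteq> conformal_coord ` {0<..}"
    proof
      fix s :: real assume s: "s \<in> {0<..}"
      have "conformal_coord 0 = 0" unfolding conformal_coord_def by simp
      moreover have "s \<le> conformal_coord (s / c)"
        using conformal_scale_ge[of "s / c"] s cpos
        by (simp add: conformal_coord_eq field_simps mult_left_mono)
      moreover have "continuous_on {0..s/c} conformal_coord"
        using conformal_coord_has_real_derivative DERIV_isCont
        by (intro continuous_at_imp_continuous_on) blast
      ultimately obtain u where "0 \<le> u" "conformal_coord u = s"
        using IVT'[of conformal_coord 0 s "s / c"] s cpos by auto
      moreover from this have "u \<noteq> 0" using \<open>conformal_coord 0 = 0\<close> s by auto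
      ultimately show "s \<in> conformal_coord ` {0<..}" by force
    qed
  qed
qed

lemma smooth_on_conformal_coord: "smooth_on {0<..} conformal_coord"
  unfolding conformal_coord_def[abs_def]
  by (intro smooth_on_arith_intros smooth_on_id) (auto simp: one_plus_rho_pos less_imp_neq[symmetric])

lemma diffeo_pos_conformal_coord: "diffeo_pos conformal_coord"
  unfolding diffeo_pos_def
  using bij_betw_conformal_coord smooth_on_conformal_coord
    smooth_on_inv_into[OF _ _ bij_betw_conformal_coord smooth_on_conformal_coord]
  by (simp add: deriv_conformal_coord less_imp_neq[OF mu_pos, symmetric])

lemma conformal_to_half_plane:
  "\<exists>t Phi. diffeo_pos t \<and> smooth_on {p :: real \<times> real. fst p > 0} Phi
     \<and> (\<forall>p. fst p > 0 \<longrightarrow> Phi p > 0)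
     \<and> (\<forall>u y. u > 0 \<longrightarrow>
          g_aa n e r xp (acoord u) * (deriv acoord u)\<^sup>2 = Phi (u, y) * (deriv t u)\<^sup>2 / (t u)\<^sup>2
          \<and> g_yy (acoord u) = Phi (u, y) / (t u)\<^sup>2)"
proof (intro exI conjI allI impI)
  let ?Phi = "\<lambda>p::real \<times> real. (1 + (fst p)\<^sup>2) * (conformal_scale (fst p))\<^sup>2"
  show "diffeo_pos conformal_coord" by (rule diffeo_pos_conformal_coord)
  show "smooth_on {p. fst p > 0} ?Phi"
    unfolding conformal_scale_def
    by (intro smooth_on_fst_compose smooth_on_arith_intros smooth_on_id)
      (auto simp: one_plus_rho_pos less_imp_neq[symmetric])
  show "?Phi p > 0" for p
    using conformal_scale_pos[of "fst p"] one_plus_square_pos[of "fst p"] by simp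
  fix u y :: real assume u: "u > 0"
  have "conformal_scale u \<noteq> 0" using conformal_scale_pos[of u] by simp
  then show "g_aa n e r xp (acoord u) * (deriv acoord u)\<^sup>2
      = ?Phi (u, y) * (deriv conformal_coord u)\<^sup>2 / (conformal_coord u)\<^sup>2"
    and "g_yy (acoord u) = ?Phi (u, y) / (conformal_coord u)\<^sup>2"
    unfolding g_aa_acoord[OF u] g_yy_acoord deriv_conformal_coord conformal_coord_eq
    using u by (simp_all add: field_simps power2_eq_square)
qed

subsection \<open>Smoothness of the integrals\<close>

lemma Delta_acoord_pos: "0 < u \<Longrightarrow> i \<in> {1..n} \<Longrightarrow> 0 < e i * (acoord u - r i)"
  using Delta_pos[OF acoord_in_unit_interval] unfolding Delta_def by blast

lemma deriv_xcon_acoord_pos: "0 < u \<Longrightarrow> 0 < deriv (xcon n e r xp) (acoord u)"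
  using mu_pos[of u] one_plus_square_pos[of u] by (simp add: deriv_xcon_acoord)

lemma sign_nonzero: "e i \<noteq> 0"
  using sign_square[of i] by auto

lemma root_notin_unit_interval: "i \<in> {1..n} \<Longrightarrow> r i \<notin> {0<..<1}"
  using Delta_pos[of "r i" i] by (auto simp: Delta_def)

lemma smooth_on_deriv_xcon_acoord: "smooth_on {0<..} (\<lambda>u. deriv (xcon n e r xp) (acoord u))"
proof -
  have "smooth_on {0<..<1} (xcon n e r xp)"
    unfolding xcon_def[abs_def] Delta_def
    using Delta_pos root_notin_unit_interval unfolding Delta_def
    by (intro smooth_on_arith_intros smooth_on_id) (auto simp: sign_nonzero)
  then show ?thesis
    using acoord_in_unit_interval
    by (intro smooth_on_compose[OF _ _ smooth_on_deriv _ smooth_on_acoord]) auto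
qed

lemma smooth_on_phase_space_coords:
  fixes S :: "(real \<times> real \<times> real \<times> real) set"
  assumes S: "S = {q. fst q > 0}"
  shows "smooth_on S fst" "smooth_on S (\<lambda>q. fst (snd q))" "smooth_on S (\<lambda>q. fst (snd (snd q)))"
    "smooth_on S (\<lambda>q. snd (snd (snd q)))" "smooth_on S (\<lambda>q. acoord (fst q))"
    "smooth_on S (\<lambda>q. deriv (xcon n e r xp) (acoord (fst q)))"
  unfolding S
  by (intro smooth_on_linear open_fst_pos bounded_linear_fst bounded_linear_snd
      bounded_linear_compose[OF bounded_linear_fst] bounded_linear_compose[OF bounded_linear_snd]
      smooth_on_fst_compose smooth_on_acoord smooth_on_deriv_xcon_acoord)+

lemma acoord_neq_root: "0 < u \<Longrightarrow> i \<in> {1..n} \<Longrightarrow> acoord u \<noteq> r i"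
  using acoord_in_unit_interval[of u] root_notin_unit_interval[of i] by auto

lemmas phase_space_side_conditions = open_fst_pos Delta_acoord_pos sign_nonzero acoord_neq_root
  one_plus_square_neq_zero deriv_xcon_acoord_pos

lemma smooth_on_S1con:
  "smooth_on {q :: real \<times> real \<times> real \<times> real. fst q > 0}
     (\<lambda>(u, y, Pu, Py). S1con n e r xp (acoord u) y (Pu / deriv acoord u) Py)"
  unfolding split_beta S1con_def Q1con_def Gcon_def Hcon_def Picon_def btil_def Delta_def
    deriv_acoord
  by (intro smooth_on_arith_intros smooth_on_phase_space_coords[OF refl])
    (auto simp: phase_space_side_conditions less_imp_neq[OF deriv_xcon_acoord_pos, symmetric])

lemma smooth_on_S2con:
  "smooth_on {q :: real \<times> real \<times> real \<times> real. fst q > 0}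
     (\<lambda>(u, y, Pu, Py). S2con n e r xp (acoord u) y (Pu / deriv acoord u) Py)"
  unfolding split_beta S2con_def Q1con_def Q2con_def Gcon_def Hcon_def Picon_def btil_def
    ctil_def Delta_def deriv_acoord
  by (intro smooth_on_arith_intros smooth_on_phase_space_coords[OF refl])
    (auto simp: phase_space_side_conditions less_imp_neq[OF deriv_xcon_acoord_pos, symmetric])

end

theorem proposition17:
  fixes n :: nat and av :: "nat \<Rightarrow> real" and c :: real and xi :: "nat \<Rightarrow> real"
    and r e xp :: "nat \<Rightarrow> real" and mu :: "real \<Rightarrow> real" and rho :: "nat \<Rightarrow> real"
  assumes n2: "n \<ge> 2"
    and distinct: "\<forall>i\<in>{2..n}. \<forall>j\<in>{2..n}. i \<noteq> j \<longrightarrow> av i \<noteq> av j"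
    and outside: "\<forall>i\<in>{2..n}. av i < 0 \<or> av i > 1"
    and cpos: "c > 0"
    and xipos: "\<forall>i\<in>{2..n}. xi i > 0"
    and r_def: "r = (\<lambda>i. if i = 1 then 1 else av i)"
    and e_def: "e = (\<lambda>i. if i = 1 then -1 else if av i < 0 then 1 else -1)"
    and xp_def: "xp = (\<lambda>i. if i = 1 then c
                    else - e i * (- e i * av i) powr (3/2) * xi i)"
    and rho_def: "rho = (\<lambda>i. 1 - 1 / av i)"
    and mu_def: "mu = (\<lambda>u. c + (\<Sum>i=2..n. xi i / (1 + rho i * u\<^sup>2) powr (3/2)))"
  shows
    "(\<forall>a\<in>{0<..<1::real}. xcon n e r xp a =
        c / sqrt (1 - a)
        - (\<Sum>i=2..n. e i * (- e i * av i) powr (3/2) * xi i / sqrt (e i * (a - av i))))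
     \<and> bij_betw acoord {0<..} {0<..<1}
     \<and> (\<forall>a\<in>{0<..<1::real}. acoord (sqrt (a / (1 - a))) = a)
     \<and> (\<forall>i\<in>{2..n}. rho i \<in> {0<..<1} \<union> {1<..})
     \<and> (\<forall>u>0. g_aa n e r xp (acoord u) * (deriv acoord u)\<^sup>2 = (1 + u\<^sup>2) * (mu u)\<^sup>2 / u\<^sup>2
             \<and> g_yy (acoord u) = (1 + u\<^sup>2) / u\<^sup>2)
     \<and> smooth_on {p :: real \<times> real. fst p > 0}
         (\<lambda>p. g_aa n e r xp (acoord (fst p)) * (deriv acoord (fst p))\<^sup>2)
     \<and> smooth_on {p :: real \<times> real. fst p > 0} (\<lambda>p. g_yy (acoord (fst p)))
     \<and> (\<forall>u>0. g_aa n e r xp (acoord u) * (deriv acoord u)\<^sup>2 > 0 \<and> g_yy (acoord u) > 0)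
     \<and> (\<exists>t Phi. diffeo_pos t \<and> smooth_on {p :: real \<times> real. fst p > 0} Phi
          \<and> (\<forall>p. fst p > 0 \<longrightarrow> Phi p > 0)
          \<and> (\<forall>u y. u > 0 \<longrightarrow>
               g_aa n e r xp (acoord u) * (deriv acoord u)\<^sup>2
                 = Phi (u, y) * (deriv t u)\<^sup>2 / (t u)\<^sup>2
               \<and> g_yy (acoord u) = Phi (u, y) / (t u)\<^sup>2))
     \<and> smooth_on {q :: real \<times> real \<times> real \<times> real. fst q > 0}
         (\<lambda>(u, y, Pu, Py). S1con n e r xp (acoord u) y (Pu / deriv acoord u) Py)
     \<and> smooth_on {q :: real \<times> real \<times> real \<times> real. fst q > 0}
         (\<lambda>(u, y, Pu, Py). S2con n e r xp (acoord u) y (Pu / deriv acoord u) Py)"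
proof -
  interpret superintegrable_data n av c xi r e xp mu rho
    by unfold_locales (fact n2 outside cpos xipos r_def e_def xp_def rho_def mu_def)+
  have "\<forall>a\<in>{0<..<1::real}. acoord (sqrt (a / (1 - a))) = a"
    using acoord_sqrt_ratio by blast
  moreover have "\<forall>u>0. g_aa n e r xp (acoord u) * (deriv acoord u)\<^sup>2 = (1 + u\<^sup>2) * (mu u)\<^sup>2 / u\<^sup>2
      \<and> g_yy (acoord u) = (1 + u\<^sup>2) / u\<^sup>2"
    using g_aa_acoord g_yy_acoord by blast
  moreover have "\<forall>u>0. g_aa n e r xp (acoord u) * (deriv acoord u)\<^sup>2 > 0 \<and> g_yy (acoord u) > 0"
    using g_aa_acoord_pos one_plus_square_pos by (simp add: g_yy_acoord)
  ultimately show ?thesis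
    using xcon_explicit bij_betw_acoord rho_range smooth_on_g_aa_acoord smooth_on_g_yy_acoord
      conformal_to_half_plane smooth_on_S1con smooth_on_S2con
    by blast
qed

end
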